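(* Let $\gamma:S^n\to\mathbb{R}_+$ be continuous. Then $\mathcal W_\gamma$ is a self-dual Wulff shape if and only if the spherical convex body $\alpha_N^{-1}\circ Id(\mathcal W_\gamma)\subset S^{n+1}$ is of constant diameter $\pi/2$.
   Context: Wulff shapes. For continuous $\gamma:S^n\to\mathbb{R}_+$, the Wulff shape is $\mathcal W_\gamma=\bigcap_{\theta\in S^n}\{x\in\mathbb{R}^{n+1}:x\cdot\theta\le\gamma(\theta)\}$. Its radial function is $\rho(\theta)=\max\{\lambda>0:\lambda\theta\in\mathcal W_\gamma\}$. Dual and self-dual Wulff shapes. With $\bar\gamma(\theta)=1/\rho(-\theta)$, the dual Wulff shape is $\mathcal{DW}_\gamma=\mathcal W_{\bar\gamma}$; equivalently $\mathcal{DW}_\gamma=-(\mathcal W_\gamma)^\circ$, where $K^\circ=\{x:x\cdot y\le1\ \forall y\in K\}$ is the Euclidean polar. $\mathcal W_\gamma$ is self-dual if $\mathcal W_\gamma=\mathcal{DW}_\gamma$. The maps. $Id(x)=(x,1)$. With $N=(0,\dots,0,1)$ and $S^{n+1}_{N,+}=\{Q\in S^{n+1}:Q_{n+2}>0\}$, the central projection $\alpha_N:S^{n+1}_{N,+}\to\mathbb{R}^{n+1}\times\{1\}$ is $\alpha_N(P_1,\dots,P_{n+2})=(P_1/P_{n+2},\dots,P_{n+1}/P_{n+2},1)$. Constant diameter. The spherical distance on $S^{n+1}$ is $|PQ|=\arccos(P\cdot Q)$. The diameter of $K$ is $\max\{|PQ|:P,Q\in K\}$. A spherical convex body $K$ is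 of constant diameter $\tau$ if its diameter is $\tau$ and, for every boundary point $P$ of $K$ (boundary relative to $S^{n+1}$), there is $Q\in K$ with $|PQ|=\tau$. *)

theory Defs
  imports "HOL-Analysis.Analysis"
begin

text \<open>R^{n+1} is modelled by an arbitrary Euclidean space 'a; S^n is its unit sphere.
  R^{n+2} = R^{n+1} x R is modelled by the product type 'a \<times> real, and
  S^{n+1} is the unit sphere there.\<close>

definition wulff :: "('a::euclidean_space \<Rightarrow> real) \<Rightarrow> 'a set" where
  "wulff \<gamma> = (\<Inter>\<theta>\<in>sphere 0 1. {x. x \<bullet> \<theta> \<le> \<gamma> \<theta>})"

definition radial :: "'a::euclidean_space set \<Rightarrow> 'a \<Rightarrow> real" where
  "radial W \<theta> = Sup {t. t > 0 \<and> t *\<^sub>R \<theta> \<in> W}"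

definition dual_gamma :: "('a::euclidean_space \<Rightarrow> real) \<Rightarrow> 'a \<Rightarrow> real" where
  "dual_gamma \<gamma> \<theta> = 1 / radial (wulff \<gamma>) (- \<theta>)"

definition dual_wulff :: "('a::euclidean_space \<Rightarrow> real) \<Rightarrow> 'a set" where
  "dual_wulff \<gamma> = wulff (dual_gamma \<gamma>)"

definition self_dual :: "('a::euclidean_space \<Rightarrow> real) \<Rightarrow> bool" where
  "self_dual \<gamma> \<longleftrightarrow> wulff \<gamma> = dual_wulff \<gamma>"

definition Id_map :: "'a::euclidean_space \<Rightarrow> 'a \<times> real" where
  "Id_map x = (x, 1)"

definition north_hemisphere :: "('a::euclidean_space \<times> real) set" where
  "north_hemisphere = {Q \<in> sphere 0 1. snd Q > 0}"

definition alpha_N :: "'a::euclidean_space \<times> real \<Rightarrow> 'a \<times> real" where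
  "alpha_N P = ((1 / snd P) *\<^sub>R fst P, 1)"

definition alpha_N_inv_image :: "('a::euclidean_space \<times> real) set \<Rightarrow> ('a \<times> real) set" where
  "alpha_N_inv_image A = {P \<in> north_hemisphere. alpha_N P \<in> A}"

definition sph_dist :: "'b::real_inner \<Rightarrow> 'b \<Rightarrow> real" where
  "sph_dist P Q = arccos (P \<bullet> Q)"

definition sph_diameter :: "'b::real_inner set \<Rightarrow> real" where
  "sph_diameter K = Sup {sph_dist P Q | P Q. P \<in> K \<and> Q \<in> K}"

definition constant_diameter :: "'b::euclidean_space set \<Rightarrow> real \<Rightarrow> bool" where
  "constant_diameter K \<tau> \<longleftrightarrow>
     sph_diameter K = \<tau> \<and>
     (\<forall>P \<in> (top_of_set (sphere 0 1)) frontier_of K. \<exists>Q \<in> K. sph_dist P Q = \<tau>)"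

end

theory Submission
  imports Defs
begin

text \<open>The map \<open>x \<mapsto> (x,1)/|(x,1)|\<close> inverts the central projection onto the upper
  hemisphere, and the inner product of two lifted points is a positive multiple of \<open>x \<bullet> y + 1\<close>.
  Hence spherical distance at most (resp. exactly) \<open>\<pi>/2\<close> means \<open>x \<bullet> y \<ge> -1\<close> (resp. \<open>= -1\<close>).
  The dual Wulff shape of \<open>W\<close> is \<open>-W\<degree> = {x. \<forall>y\<in>W. x \<bullet> y \<ge> -1}\<close>, so \<open>W \<subseteq> -W\<degree>\<close> is the
  diameter bound. Given it, \<open>-W\<degree> \<subseteq> W\<close> is equivalent to the boundary condition: a boundary
  point of \<open>W = -W\<degree>\<close> without a partner \<open>y\<close> with \<open>x \<bullet> y = -1\<close> would be interior to \<open>-W\<degree>\<close>;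
  conversely, a point \<open>z \<in> -W\<degree> - W\<close> gives a boundary point \<open>t z\<close>, \<open>0 < t < 1\<close>, whose
  partner \<open>y\<close> would force \<open>z \<bullet> y = -1/t < -1\<close>.\<close>

text \<open>\<open>hemisphere_lift\<close> is \<open>\<alpha>\<^sub>N\<^sup>-\<^sup>1 \<circ> Id\<close>; \<open>central_proj\<close> is \<open>\<alpha>\<^sub>N\<close> without its constant
  last coordinate.\<close>

definition hemisphere_lift :: "'a::euclidean_space \<Rightarrow> 'a \<times> real" where
  "hemisphere_lift x = (1 / sqrt (1 + (norm x)\<^sup>2)) *\<^sub>R (x, 1)"

definition central_proj :: "'a::euclidean_space \<times> real \<Rightarrow> 'a" where
  "central_proj P = (1 / snd P) *\<^sub>R fst P"

lemma one_plus_norm_sq_pos: "0 < 1 + (norm x)\<^sup>2"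
  by (simp add: add_pos_nonneg)

lemma sqrt_one_plus_norm_sq_pos: "0 < sqrt (1 + (norm x)\<^sup>2)"
  by (simp add: one_plus_norm_sq_pos)

lemma norm_hemisphere_lift [simp]: "norm (hemisphere_lift x) = 1"
proof -
  have "norm (x, 1::real) = sqrt (1 + (norm x)\<^sup>2)"
    by (simp add: norm_Pair add.commute)
  then show ?thesis
    using sqrt_one_plus_norm_sq_pos[of x] unfolding hemisphere_lift_def norm_scaleR by simp
qed

lemma snd_hemisphere_lift_pos: "0 < snd (hemisphere_lift x)"
  using sqrt_one_plus_norm_sq_pos[of x] by (simp add: hemisphere_lift_def)

lemma hemisphere_lift_in_north_hemisphere: "hemisphere_lift x \<in> north_hemisphere"
  by (simp add: north_hemisphere_def snd_hemisphere_lift_pos)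

lemma central_proj_hemisphere_lift [simp]: "central_proj (hemisphere_lift x) = x"
  using sqrt_one_plus_norm_sq_pos[of x] one_plus_norm_sq_pos[of x]
  by (simp add: central_proj_def hemisphere_lift_def del: real_sqrt_gt_0_iff)

lemma hemisphere_lift_central_proj:
  assumes "P \<in> north_hemisphere"
  shows "hemisphere_lift (central_proj P) = P"
proof -
  obtain a b where P: "P = (a, b)" by force
  have b: "b > 0" and n: "(norm a)\<^sup>2 + b\<^sup>2 = 1"
    using assms by (auto simp: P north_hemisphere_def norm_Pair)
  have "1 + (norm ((1/b) *\<^sub>R a))\<^sup>2 = (1/b)\<^sup>2"
    using n b by (simp add: power_divide field_simps)
  then have "sqrt (1 + (norm ((1/b) *\<^sub>R a))\<^sup>2) = 1/b"
    using b by simp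
  then show ?thesis
    using b by (simp add: P hemisphere_lift_def central_proj_def)
qed

lemma alpha_N_inv_image_Id_map: "alpha_N_inv_image (Id_map ` W) = hemisphere_lift ` W"
proof -
  have "alpha_N P = (central_proj P, 1)" for P :: "'a \<times> real"
    by (simp add: alpha_N_def central_proj_def)
  then have "alpha_N_inv_image (Id_map ` W) = {P \<in> north_hemisphere. central_proj P \<in> W}"
    by (auto simp: alpha_N_inv_image_def Id_map_def)
  also have "\<dots> = hemisphere_lift ` W"
    by (auto simp: hemisphere_lift_central_proj hemisphere_lift_in_north_hemisphere
             intro!: image_eqI[where x = "central_proj _"])
  finally show ?thesis .
qed

lemma continuous_on_hemisphere_lift: "continuous_on S hemisphere_lift"
  unfolding hemisphere_lift_def
  by (intro continuous_intros) (metis sqrt_one_plus_norm_sq_pos less_irrefl)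

lemma homeomorphic_maps_hemisphere_lift:
  "homeomorphic_maps euclidean (top_of_set north_hemisphere) hemisphere_lift central_proj"
proof -
  have "continuous_on north_hemisphere central_proj"
    unfolding central_proj_def by (intro continuous_intros) (auto simp: north_hemisphere_def)
  then show ?thesis
    unfolding homeomorphic_maps_def
    by (auto simp: hemisphere_lift_in_north_hemisphere hemisphere_lift_central_proj
        continuous_on_hemisphere_lift continuous_map_in_subtopology
        simp flip: subtopology_UNIV)
qed

text \<open>Compactness keeps the relative frontier in the sphere away from the equator, so it can be
  computed in the open hemisphere, where \<open>hemisphere_lift\<close> is a homeomorphism.\<close>

lemma frontier_of_hemisphere_lift_image:
  fixes W :: "'a::euclidean_space set"
  assumes "compact W"
  shows "top_of_set (sphere 0 1) frontier_of (hemisphere_lift ` W) = hemisphere_lift ` frontier W"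
proof -
  let ?K = "hemisphere_lift ` W"
  have "closed ?K"
    by (simp add: assms compact_continuous_image compact_imp_closed continuous_on_hemisphere_lift)
  then have "top_of_set (sphere 0 1) frontier_of ?K \<subseteq> ?K"
    by (intro frontier_of_subset_closedin closed_subset) auto
  also have "?K \<subseteq> north_hemisphere"
    using hemisphere_lift_in_north_hemisphere by blast
  finally have "top_of_set (sphere 0 1) frontier_of ?K
      = north_hemisphere \<inter> top_of_set (sphere 0 1) frontier_of ?K"
    by blast
  also have "\<dots> = top_of_set north_hemisphere frontier_of ?K"
  proof -
    have "openin (top_of_set (sphere 0 1)) north_hemisphere"
      unfolding openin_open
      by (rule exI[of _ "{P. snd P > 0}"])
        (auto simp: north_hemisphere_def intro!: open_Collect_less continuous_intros)
    moreover have "subtopology (top_of_set (sphere 0 1)) north_hemisphere = top_of_set north_hemisphere"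
      by (simp add: subtopology_subtopology north_hemisphere_def Int_absorb1 subset_iff)
    ultimately show ?thesis
      by (metis frontier_of_subtopology_open)
  qed
  also have "\<dots> = hemisphere_lift ` frontier W"
    using homeomorphic_map_frontier_of[OF homeomorphic_maps_imp_map[OF homeomorphic_maps_hemisphere_lift]]
    by simp
  finally show ?thesis .
qed

lemma inner_hemisphere_lift:
  "hemisphere_lift x \<bullet> hemisphere_lift y
     = (x \<bullet> y + 1) / (sqrt (1 + (norm x)\<^sup>2) * sqrt (1 + (norm y)\<^sup>2))"
  by (simp add: hemisphere_lift_def field_simps add_divide_distrib[symmetric])

lemma inner_hemisphere_lift_bounds:
  "-1 \<le> hemisphere_lift x \<bullet> hemisphere_lift y \<and> hemisphere_lift x \<bullet> hemisphere_lift y \<le> 1"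
  using Cauchy_Schwarz_ineq2[of "hemisphere_lift x" "hemisphere_lift y"] by auto

lemma sph_dist_hemisphere_lift_le_pi:
  "sph_dist (hemisphere_lift x) (hemisphere_lift y) \<le> pi"
  using inner_hemisphere_lift_bounds[of x y] by (simp add: sph_dist_def arccos_ubound)

lemma sph_dist_hemisphere_lift_le_pi_half_iff:
  "sph_dist (hemisphere_lift x) (hemisphere_lift y) \<le> pi / 2 \<longleftrightarrow> -1 \<le> x \<bullet> y"
proof -
  let ?c = "hemisphere_lift x \<bullet> hemisphere_lift y"
  have bounds: "-1 \<le> ?c" "?c \<le> 1"
    using inner_hemisphere_lift_bounds by auto
  have "0 \<le> ?c \<longleftrightarrow> -1 \<le> x \<bullet> y"
    using mult_pos_pos[OF sqrt_one_plus_norm_sq_pos[of x] sqrt_one_plus_norm_sq_pos[of y]]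
    by (auto simp: inner_hemisphere_lift zero_le_divide_iff)
  moreover have "arccos ?c \<le> pi / 2 \<longleftrightarrow> 0 \<le> ?c"
    using bounds arccos_le_pi2[of ?c] arccos_less_arccos[of ?c 0] by force
  ultimately show ?thesis
    by (simp add: sph_dist_def)
qed

lemma sph_dist_hemisphere_lift_eq_pi_half_iff:
  "sph_dist (hemisphere_lift x) (hemisphere_lift y) = pi / 2 \<longleftrightarrow> x \<bullet> y = -1"
proof -
  let ?c = "hemisphere_lift x \<bullet> hemisphere_lift y"
  have "?c = 0 \<longleftrightarrow> x \<bullet> y = -1"
    using sqrt_one_plus_norm_sq_pos[of x] sqrt_one_plus_norm_sq_pos[of y]
    by (auto simp: inner_hemisphere_lift)
  moreover have "arccos ?c = pi / 2 \<longleftrightarrow> ?c = 0"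
    using inner_hemisphere_lift_bounds[of x y] arccos_eq_iff[of ?c 0] by auto
  ultimately show ?thesis
    by (simp add: sph_dist_def)
qed

lemma constant_diameter_hemisphere_lift_iff:
  fixes W :: "'a::euclidean_space set"
  assumes "compact W" and "frontier W \<noteq> {}"
  shows "constant_diameter (hemisphere_lift ` W) (pi / 2) \<longleftrightarrow>
           (\<forall>x\<in>W. \<forall>y\<in>W. -1 \<le> x \<bullet> y) \<and> (\<forall>x\<in>frontier W. \<exists>y\<in>W. x \<bullet> y = -1)"
    (is "_ \<longleftrightarrow> ?polar \<and> ?touch")
proof -
  define D where "D = {sph_dist P Q | P Q. P \<in> hemisphere_lift ` W \<and> Q \<in> hemisphere_lift ` W}"
  have bdd: "bdd_above D"
    unfolding D_def by (rule bdd_aboveI[of _ pi]) (auto simp: sph_dist_hemisphere_lift_le_pi)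
  have touch_iff: "(\<forall>P\<in>top_of_set (sphere 0 1) frontier_of (hemisphere_lift ` W).
                      \<exists>Q\<in>hemisphere_lift ` W. sph_dist P Q = pi / 2) \<longleftrightarrow> ?touch"
    by (simp only: frontier_of_hemisphere_lift_image[OF assms(1)] ball_simps bex_simps
        sph_dist_hemisphere_lift_eq_pi_half_iff)
  have "Sup D = pi / 2 \<longleftrightarrow> ?polar" if ?touch
  proof
    assume "Sup D = pi / 2"
    then have "sph_dist (hemisphere_lift x) (hemisphere_lift y) \<le> pi / 2" if "x \<in> W" "y \<in> W" for x y
    proof -
      have "sph_dist (hemisphere_lift x) (hemisphere_lift y) \<in> D"
        using that unfolding D_def by blast
      then show ?thesis
        using cSup_upper[OF _ bdd] \<open>Sup D = pi / 2\<close> by simp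
    qed
    then show ?polar
      using sph_dist_hemisphere_lift_le_pi_half_iff by blast
  next
    assume ?polar
    obtain x y where xy: "x \<in> frontier W" "y \<in> W" "x \<bullet> y = -1"
      using \<open>?touch\<close> assms(2) by blast
    then have "x \<in> W"
      using frontier_subset_closed[OF compact_imp_closed[OF assms(1)]] by blast
    then have "sph_dist (hemisphere_lift x) (hemisphere_lift y) \<in> D"
      using xy unfolding D_def by blast
    then have "pi / 2 \<in> D"
      using xy sph_dist_hemisphere_lift_eq_pi_half_iff by metis
    moreover have "d \<le> pi / 2" if "d \<in> D" for d
      using that \<open>?polar\<close> sph_dist_hemisphere_lift_le_pi_half_iff unfolding D_def by blast
    ultimately show "Sup D = pi / 2"
      by (rule cSup_eq_maximum)
  qed
  then show ?thesis
    unfolding constant_diameter_def sph_diameter_def D_def[symmetric] touch_iff by blast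
qed

definition neg_polar :: "'a::real_inner set \<Rightarrow> 'a set" where
  "neg_polar W = {x. \<forall>y\<in>W. -1 \<le> x \<bullet> y}"

lemma interior_neg_polarI:
  fixes W :: "'a::euclidean_space set"
  assumes W: "compact W" "W \<noteq> {}"
    and x: "x \<in> neg_polar W" "\<forall>y\<in>W. x \<bullet> y \<noteq> -1"
  shows "x \<in> interior (neg_polar W)"
proof -
  obtain y0 where y0: "y0 \<in> W" "\<forall>y\<in>W. x \<bullet> y0 \<le> x \<bullet> y"
    using continuous_attains_inf[OF W, of "\<lambda>y. x \<bullet> y"]
      continuous_on_inner[OF continuous_on_const continuous_on_id] by blast
  obtain M where M: "M > 0" "\<forall>y\<in>W. norm y \<le> M"
    using compact_imp_bounded[OF W(1)] by (meson bounded_pos)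
  define e where "e = (x \<bullet> y0 + 1) / M"
  have "x \<bullet> y0 > -1"
    using x y0 unfolding neg_polar_def by force
  then have "e > 0"
    using M by (simp add: e_def)
  moreover have "ball x e \<subseteq> neg_polar W"
  proof
    fix x' assume "x' \<in> ball x e"
    then have d: "norm (x' - x) < e"
      by (simp add: dist_norm norm_minus_commute)
    have "-1 \<le> x' \<bullet> y" if y: "y \<in> W" for y
    proof -
      have "\<bar>(x' - x) \<bullet> y\<bar> \<le> norm (x' - x) * norm y"
        by (rule Cauchy_Schwarz_ineq2)
      also have "\<dots> \<le> e * M"
        using d M y \<open>e > 0\<close> by (intro mult_mono) auto
      also have "\<dots> = x \<bullet> y0 + 1"
        using M by (simp add: e_def)
      finally have "x \<bullet> y0 + (x' - x) \<bullet> y \<ge> -1"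
        by linarith
      moreover have "x \<bullet> y0 \<le> x \<bullet> y"
        using y0(2) y by blast
      ultimately show ?thesis
        by (simp add: inner_diff_left)
    qed
    then show "x' \<in> neg_polar W"
      by (simp add: neg_polar_def)
  qed
  ultimately show ?thesis
    by (meson mem_interior)
qed

lemma ray_meets_frontier:
  fixes W :: "'a::euclidean_space set"
  assumes "closed W" "0 \<in> interior W" "z \<notin> W"
  shows "\<exists>t. 0 < t \<and> t < 1 \<and> t *\<^sub>R z \<in> frontier W"
proof -
  have "0 \<in> W"
    using assms(2) interior_subset by blast
  then obtain p where p: "p \<in> closed_segment 0 z" "p \<in> frontier W"
    using connected_Int_frontier[OF connected_segment, of 0 z W] assms(3) by blast
  then obtain t where t: "0 \<le> t" "t \<le> 1" "p = t *\<^sub>R z"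
    by (auto simp: closed_segment_def)
  have "t \<noteq> 0"
    using p(2) t(3) assms(2) by (metis DiffD2 frontier_def scaleR_zero_left)
  moreover have "t \<noteq> 1"
    using p(2) t(3) assms(3) frontier_subset_closed[OF assms(1)] by auto
  ultimately show ?thesis
    using p(2) t by (metis order_le_less)
qed

lemma neg_polar_eq_self_iff:
  fixes W :: "'a::euclidean_space set"
  assumes "compact W" "0 \<in> interior W"
  shows "neg_polar W = W \<longleftrightarrow>
           (\<forall>x\<in>W. \<forall>y\<in>W. -1 \<le> x \<bullet> y) \<and> (\<forall>x\<in>frontier W. \<exists>y\<in>W. x \<bullet> y = -1)"
    (is "_ \<longleftrightarrow> ?polar \<and> ?touch")
proof
  assume eq: "neg_polar W = W"
  then have ?polar
    by (auto simp: neg_polar_def)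
  moreover have ?touch
  proof (rule ballI, rule ccontr)
    fix x assume x: "x \<in> frontier W" and "\<not> (\<exists>y\<in>W. x \<bullet> y = -1)"
    moreover have "x \<in> W" "W \<noteq> {}"
      using x frontier_subset_closed[OF compact_imp_closed[OF assms(1)]] by auto
    ultimately have "x \<in> interior W"
      using interior_neg_polarI[OF assms(1), of x] eq by simp
    then show False
      using x by (simp add: frontier_def)
  qed
  ultimately show "?polar \<and> ?touch" ..
next
  assume "?polar \<and> ?touch"
  then have polar: ?polar and touch: ?touch by auto
  have "z \<in> W" if z: "z \<in> neg_polar W" for z
  proof (rule ccontr)
    assume "z \<notin> W"
    then obtain t where t: "0 < t" "t < 1" "t *\<^sub>R z \<in> frontier W"
      using ray_meets_frontier[OF compact_imp_closed[OF assms(1)] assms(2)] by blast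
    then obtain y where "y \<in> W" "(t *\<^sub>R z) \<bullet> y = -1"
      using touch by blast
    then have y: "y \<in> W" "t * (z \<bullet> y) = -1"
      by simp_all
    have "-1 \<le> z \<bullet> y"
      using z y(1) by (simp add: neg_polar_def)
    then have "-t \<le> t * (z \<bullet> y)"
      using t(1) mult_left_mono[of "-1" "z \<bullet> y" t] by simp
    then show False
      using y(2) t(2) by simp
  qed
  moreover have "W \<subseteq> neg_polar W"
    using polar by (auto simp: neg_polar_def)
  ultimately show "neg_polar W = W"
    by blast
qed

lemma
  fixes W :: "'a::euclidean_space set"
  assumes "bounded W" "0 \<in> interior W" "norm u = 1"
  shows radial_pos: "0 < radial W u"
    and le_radial: "\<lbrakk>0 < t; t *\<^sub>R u \<in> W\<rbrakk> \<Longrightarrow> t \<le> radial W u"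
    and radial_le: "(\<And>t. \<lbrakk>0 < t; t *\<^sub>R u \<in> W\<rbrakk> \<Longrightarrow> t \<le> c) \<Longrightarrow> radial W u \<le> c"
proof -
  let ?S = "{t. 0 < t \<and> t *\<^sub>R u \<in> W}"
  obtain M where M: "\<forall>x\<in>W. norm x \<le> M"
    using assms(1) bounded_iff by blast
  have bdd: "bdd_above ?S"
    using M assms(3) by (intro bdd_aboveI[of _ M]) force
  obtain m where m: "0 < m" "ball 0 m \<subseteq> W"
    using assms(2) mem_interior by blast
  have "m / 2 \<in> ?S"
    using m assms(3) by (auto simp: subset_iff)
  then show "0 < radial W u"
    unfolding radial_def using m(1) cSup_upper[OF _ bdd] by fastforce
  show "\<lbrakk>0 < t; t *\<^sub>R u \<in> W\<rbrakk> \<Longrightarrow> t \<le> radial W u"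
    unfolding radial_def by (rule cSup_upper) (use bdd in auto)
  show "(\<And>t. \<lbrakk>0 < t; t *\<^sub>R u \<in> W\<rbrakk> \<Longrightarrow> t \<le> c) \<Longrightarrow> radial W u \<le> c"
    unfolding radial_def using \<open>m / 2 \<in> ?S\<close> by (intro cSup_least) (blast, auto)
qed

lemma wulff_inverse_radial_eq_neg_polar:
  fixes W :: "'a::euclidean_space set"
  assumes "bounded W" "0 \<in> interior W"
  shows "wulff (\<lambda>\<theta>. 1 / radial W (- \<theta>)) = neg_polar W"
proof (intro equalityI subsetI)
  fix x assume x: "x \<in> wulff (\<lambda>\<theta>. 1 / radial W (- \<theta>))"
  have "-1 \<le> x \<bullet> y" if y: "y \<in> W" "y \<noteq> 0" for y
  proof -
    define \<theta> where "\<theta> = - (1 / norm y) *\<^sub>R y"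
    have \<theta>: "norm \<theta> = 1" "norm y *\<^sub>R (- \<theta>) = y"
      using y(2) by (simp_all add: \<theta>_def)
    then have "norm y \<le> radial W (- \<theta>)"
      using le_radial[OF assms, of "- \<theta>" "norm y"] y by simp
    then have "1 / radial W (- \<theta>) \<le> 1 / norm y"
      using y(2) by (simp add: frac_le)
    moreover have "x \<bullet> \<theta> \<le> 1 / radial W (- \<theta>)"
      using x \<theta>(1) unfolding wulff_def by auto
    ultimately have "x \<bullet> \<theta> \<le> 1 / norm y"
      by linarith
    then have "norm y * (x \<bullet> \<theta>) \<le> 1"
      using y(2) by (simp add: pos_le_divide_eq mult.commute)
    moreover have "x \<bullet> y = - norm y * (x \<bullet> \<theta>)"
      using y(2) by (simp add: \<theta>_def)
    ultimately show ?thesis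
      by simp
  qed
  then show "x \<in> neg_polar W"
    by (force simp: neg_polar_def)
next
  fix x assume x: "x \<in> neg_polar W"
  have "x \<bullet> \<theta> \<le> 1 / radial W (- \<theta>)" if \<theta>: "norm \<theta> = 1" for \<theta>
  proof (cases "x \<bullet> \<theta> \<le> 0")
    case True
    then show ?thesis
      using radial_pos[OF assms, of "- \<theta>"] \<theta> by (smt (verit) divide_pos_pos norm_minus_cancel)
  next
    case False
    have "radial W (- \<theta>) \<le> 1 / (x \<bullet> \<theta>)"
    proof (rule radial_le[OF assms])
      fix t assume t: "0 < t" "t *\<^sub>R - \<theta> \<in> W"
      then have "t * (x \<bullet> \<theta>) \<le> 1"
        using x unfolding neg_polar_def by force
      then show "t \<le> 1 / (x \<bullet> \<theta>)"
        using False by (simp add: field_simps)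
    qed (use \<theta> in simp)
    then show ?thesis
      using False radial_pos[OF assms, of "- \<theta>"] \<theta> by (simp add: field_simps)
  qed
  then show "x \<in> wulff (\<lambda>\<theta>. 1 / radial W (- \<theta>))"
    by (simp add: wulff_def)
qed

lemma closed_wulff: "closed (wulff \<gamma>)"
  unfolding wulff_def by (intro closed_INT ballI closed_Collect_le continuous_intros)

lemma bounded_wulff:
  fixes \<gamma> :: "'a::euclidean_space \<Rightarrow> real"
  assumes "bdd_above (\<gamma> ` sphere 0 1)"
  shows "bounded (wulff \<gamma>)"
proof -
  obtain M where M: "\<forall>\<theta>\<in>sphere 0 1. \<gamma> \<theta> \<le> M"
    using assms by (auto simp: bdd_above_def)
  have "norm x \<le> \<bar>M\<bar>" if x: "x \<in> wulff \<gamma>" "x \<noteq> 0" for x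
  proof -
    define u where "u = (1 / norm x) *\<^sub>R x"
    have "u \<in> sphere 0 1"
      using x(2) by (simp add: u_def)
    moreover have "x \<bullet> u = norm x"
      using x(2) by (simp add: u_def dot_square_norm power2_eq_square)
    ultimately show ?thesis
      using x(1) M unfolding wulff_def by force
  qed
  then show ?thesis
    unfolding bounded_iff by (metis abs_ge_zero norm_zero)
qed

lemma zero_in_interior_wulff:
  fixes \<gamma> :: "'a::euclidean_space \<Rightarrow> real"
  assumes "continuous_on (sphere 0 1) \<gamma>" "\<forall>\<theta>\<in>sphere 0 1. 0 < \<gamma> \<theta>"
  shows "0 \<in> interior (wulff \<gamma>)"
proof -
  obtain a where a: "a \<in> sphere 0 1" "\<forall>\<theta>\<in>sphere 0 1. \<gamma> a \<le> \<gamma> \<theta>"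
    using continuous_attains_inf[OF compact_sphere _ assms(1)] by fastforce
  have "ball 0 (\<gamma> a) \<subseteq> wulff \<gamma>"
  proof
    fix x :: 'a assume "x \<in> ball 0 (\<gamma> a)"
    then have "x \<bullet> \<theta> \<le> \<gamma> \<theta>" if "\<theta> \<in> sphere 0 1" for \<theta>
      using norm_cauchy_schwarz[of x \<theta>] a(2) that by force
    then show "x \<in> wulff \<gamma>"
      by (simp add: wulff_def)
  qed
  then show ?thesis
    using a(1) assms(2) by (meson centre_in_ball interior_maximal open_ball subsetD)
qed

lemma dual_wulff_eq_neg_polar:
  fixes \<gamma> :: "'a::euclidean_space \<Rightarrow> real"
  assumes "bounded (wulff \<gamma>)" "0 \<in> interior (wulff \<gamma>)"
  shows "dual_wulff \<gamma> = neg_polar (wulff \<gamma>)"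
  using wulff_inverse_radial_eq_neg_polar[OF assms]
  by (simp add: dual_wulff_def dual_gamma_def[abs_def])

theorem mainTheorem7:
  fixes \<gamma> :: "'a::euclidean_space \<Rightarrow> real"
  assumes "continuous_on (sphere 0 1) \<gamma>"
    and "\<forall>\<theta> \<in> sphere 0 1. \<gamma> \<theta> > 0"
  shows "self_dual \<gamma> \<longleftrightarrow>
         constant_diameter (alpha_N_inv_image (Id_map ` wulff \<gamma>)) (pi / 2)"
proof -
  let ?W = "wulff \<gamma>"
  have "bounded ?W"
    using assms(1) by (intro bounded_wulff bounded_imp_bdd_above compact_imp_bounded
        compact_continuous_image compact_sphere)
  have "0 \<in> interior ?W"
    using zero_in_interior_wulff[OF assms] .
  have "compact ?W"
    using \<open>bounded ?W\<close> closed_wulff by (simp add: compact_eq_bounded_closed)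
  have "frontier ?W \<noteq> {}"
    using \<open>bounded ?W\<close> \<open>0 \<in> interior ?W\<close> interior_subset[of ?W]
    by (auto simp: frontier_eq_empty)
  have "self_dual \<gamma> \<longleftrightarrow> neg_polar ?W = ?W"
    using dual_wulff_eq_neg_polar[OF \<open>bounded ?W\<close> \<open>0 \<in> interior ?W\<close>]
    by (auto simp: self_dual_def)
  also have "\<dots> \<longleftrightarrow> constant_diameter (hemisphere_lift ` ?W) (pi / 2)"
    using neg_polar_eq_self_iff[OF \<open>compact ?W\<close> \<open>0 \<in> interior ?W\<close>]
      constant_diameter_hemisphere_lift_iff[OF \<open>compact ?W\<close> \<open>frontier ?W \<noteq> {}\<close>]
    by simp
  finally show ?thesis
    by (simp add: alpha_N_inv_image_Id_map)
qed

end
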